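(* With the notation of the context, $\lim_{t\uparrow\tau}T_t=+\infty$ $\mathbb Q$-almost surely.
   Context: Fix $\gamma>0$, $D>0$. On a probability space $(\Omega_+,\mathcal F_+,\mathbb Q)$ let $x_-,y_-$ be real random variables with $x_->0$ a.s., and let $B$ be a standard Brownian motion independent of $(x_-,y_-)$. Define $\hat y(t)=e^{-\gamma t}y_-+\sqrt{2D}\int_0^t e^{-\gamma(t-s)}\,dB_s$, $t\ge0$, the random time $\tau=\inf\{s\ge0:\int_0^s\hat y(r)\,dr=x_-^{-3}/3\}$ (which is finite $\mathbb Q$-a.s.), the process $\hat x(t)=\big[x_-^{-3}-3\int_0^t\hat y(s)\,ds\big]^{-1/3}$ for $t<\tau$, and $T_t=\int_0^t\hat x(s)^4\,ds$ for $t<\tau$, $T_t=+\infty$ for $t\ge\tau$. *)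

theory Defs
  imports "HOL-Probability.Probability"
begin

definition std_brownian_motion :: "'a measure \<Rightarrow> (real \<Rightarrow> 'a \<Rightarrow> real) \<Rightarrow> bool" where
  "std_brownian_motion M B \<longleftrightarrow>
     prob_space M \<and>
     (\<forall>t\<ge>0. B t \<in> borel_measurable M) \<and>
     (AE \<omega> in M. B 0 \<omega> = 0 \<and> continuous_on {0..} (\<lambda>t. B t \<omega>)) \<and>
     (\<forall>(ts :: nat \<Rightarrow> real) n. 0 \<le> ts 0 \<and> strict_mono ts \<longrightarrow>
        prob_space.indep_vars M (\<lambda>_. borel) (\<lambda>i \<omega>. B (ts (Suc i)) \<omega> - B (ts i) \<omega>) {..<n}) \<and>
     (\<forall>s t. 0 \<le> s \<and> s < t \<longrightarrow>
        distributed M lborel (\<lambda>\<omega>. B t \<omega> - B s \<omega>) (\<lambda>z. ennreal (normal_density 0 (sqrt (t - s)) z)))"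

definition process_events :: "'a measure \<Rightarrow> (real \<Rightarrow> 'a \<Rightarrow> real) \<Rightarrow> 'a set set" where
  "process_events M B = sigma_sets (space M) (\<Union>t\<in>{0..}. {B t -` S \<inter> space M | S. S \<in> sets borel})"

definition pair_events :: "'a measure \<Rightarrow> ('a \<Rightarrow> real) \<Rightarrow> ('a \<Rightarrow> real) \<Rightarrow> 'a set set" where
  "pair_events M x y = {(\<lambda>\<omega>. (x \<omega>, y \<omega>)) -` S \<inter> space M | S. S \<in> sets (borel :: (real \<times> real) measure)}"

text \<open>Ornstein-Uhlenbeck process yhat(t) = e^{-g t} y + sqrt(2D) int_0^t e^{-g(t-s)} dB_s.
  The Wiener integral of the deterministic C^1 integrand is written pathwise via
  integration by parts:  int_0^t e^{-g(t-s)} dB_s = B_t - B_0 - g int_0^t e^{-g(t-s)} B_s ds.\<close>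
definition yhat :: "real \<Rightarrow> real \<Rightarrow> ('a \<Rightarrow> real) \<Rightarrow> (real \<Rightarrow> 'a \<Rightarrow> real) \<Rightarrow> real \<Rightarrow> 'a \<Rightarrow> real" where
  "yhat \<gamma> D y B t \<omega> = exp (- \<gamma> * t) * y \<omega> +
     sqrt (2 * D) * (B t \<omega> - B 0 \<omega> - \<gamma> * integral {0..t} (\<lambda>s. exp (- \<gamma> * (t - s)) * B s \<omega>))"

definition tau :: "real \<Rightarrow> real \<Rightarrow> ('a \<Rightarrow> real) \<Rightarrow> ('a \<Rightarrow> real) \<Rightarrow> (real \<Rightarrow> 'a \<Rightarrow> real) \<Rightarrow> 'a \<Rightarrow> real" where
  "tau \<gamma> D x y B \<omega> = Inf {s. 0 \<le> s \<and> integral {0..s} (\<lambda>r. yhat \<gamma> D y B r \<omega>) = x \<omega> powr (-3) / 3}"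

definition xhat :: "real \<Rightarrow> real \<Rightarrow> ('a \<Rightarrow> real) \<Rightarrow> ('a \<Rightarrow> real) \<Rightarrow> (real \<Rightarrow> 'a \<Rightarrow> real) \<Rightarrow> real \<Rightarrow> 'a \<Rightarrow> real" where
  "xhat \<gamma> D x y B t \<omega> = (x \<omega> powr (-3) - 3 * integral {0..t} (\<lambda>s. yhat \<gamma> D y B s \<omega>)) powr (- 1 / 3)"

definition Tclock :: "real \<Rightarrow> real \<Rightarrow> ('a \<Rightarrow> real) \<Rightarrow> ('a \<Rightarrow> real) \<Rightarrow> (real \<Rightarrow> 'a \<Rightarrow> real) \<Rightarrow> real \<Rightarrow> 'a \<Rightarrow> ereal" where
  "Tclock \<gamma> D x y B t \<omega> =
     (if t < tau \<gamma> D x y B \<omega> then ereal (integral {0..t} (\<lambda>s. xhat \<gamma> D x y B s \<omega> ^ 4)) else \<infinity>)"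

end

theory Submission
  imports Defs "HOL-Real_Asymp.Real_Asymp"
begin

text \<open>Along a fixed path, the integral of yhat over [0, t] equals
  y (1 - exp (-\<gamma> t)) / \<gamma> + sqrt (2 D) J(t), where J(t) = exp_conv \<gamma> B t is the integral
  of exp (-\<gamma> (t - s)) B s over [0, t]. If J is unbounded above, the level x^(-3) / 3 is first
  reached at some \<tau> > 0; yhat is bounded by some M on [0, \<tau>], so xhat(s)^(-3) \<le> 3 M (\<tau> - s)
  and xhat^4 \<ge> (3 M (\<tau> - s))^(-4/3), which is not integrable up to \<tau>.

  J is almost surely unbounded above because J(t) \<ge> c B t - R t, where R t, the integral of
  exp (-\<gamma> (t - s)) |B t - B s| over [0, t], has expectation bounded uniformly in t. Along a sparse
  grid of times, with high probability R is small at every grid time and B is not too negative,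
  so if J stayed below K, every increment of B between consecutive grid times would stay below
  a multiple of its standard deviation; by independence this has probability at most
  (1 - exp (-2) / sqrt (2 \<pi>))^m for m grid steps.\<close>

section \<open>Elementary real analysis\<close>

lemma has_integral_exp_decay:
  fixes a t :: real
  assumes "a \<noteq> 0" and "0 \<le> t"
  shows "((\<lambda>s. exp (- a * (t - s))) has_integral (1 - exp (- a * t)) / a) {0..t}"
proof -
  have "((\<lambda>s. exp (- a * (t - s))) has_integral (exp (- a * (t - t)) / a - exp (- a * (t - 0)) / a)) {0..t}"
  proof (rule fundamental_theorem_of_calculus[OF \<open>0 \<le> t\<close>])
    fix s assume "s \<in> {0..t}"
    have "((\<lambda>s. exp (- a * (t - s)) / a) has_real_derivative (exp (- a * (t - s)) * a / a)) (at s within {0..t})"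
      by (auto intro!: derivative_eq_intros)
    then show "((\<lambda>s. exp (- a * (t - s)) / a) has_vector_derivative exp (- a * (t - s))) (at s within {0..t})"
      using assms by (simp add: has_real_derivative_iff_has_vector_derivative)
  qed
  then show ?thesis by (simp add: diff_divide_distrib)
qed

lemma nn_integral_indicator_eq_integral:
  fixes g :: "real \<Rightarrow> real"
  assumes "continuous_on {a..b} g" and "\<And>s. s \<in> {a..b} \<Longrightarrow> 0 \<le> g s"
  shows "(\<integral>\<^sup>+s. ennreal (indicator {a..b} s * g s) \<partial>lborel) = ennreal (integral {a..b} g)"
  using assms
  by (intro nn_integral_has_integral_lebesgue integrable_integral integrable_continuous_interval) auto

lemma nn_integral_exp_decay_le:
  assumes "0 < a" and "0 \<le> C" and "0 \<le> t"
  shows "(\<integral>\<^sup>+s. ennreal (indicator {0..t} s * (C * exp (- a * (t - s)))) \<partial>lborel) \<le> ennreal (C / a)"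
proof -
  have "(\<integral>\<^sup>+s. ennreal (indicator {0..t} s * (C * exp (- a * (t - s)))) \<partial>lborel)
      = ennreal (C * ((1 - exp (- a * t)) / a))"
    using has_integral_mult_right[OF has_integral_exp_decay[of a t], of C] assms
    by (intro nn_integral_has_integral_lebesgue) auto
  also have "\<dots> \<le> ennreal (C * (1 / a))"
    using assms by (intro ennreal_leI mult_left_mono divide_right_mono) auto
  finally show ?thesis by simp
qed

lemma sqrt_mult_exp_le:
  fixes g u :: real
  assumes "0 < g" and "0 \<le> u"
  shows "sqrt u * exp (- g * u) \<le> (1 + 2 / g) * exp (- (g / 2) * u)"
proof -
  have "sqrt u \<le> 1 + u"
    using \<open>0 \<le> u\<close> by (intro real_le_lsqrt) (auto simp: power2_eq_square algebra_simps)
  also have "\<dots> \<le> (1 + 2 / g) * (1 + (g / 2) * u)"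
    using assms by (simp add: field_simps)
  also have "\<dots> \<le> (1 + 2 / g) * exp ((g / 2) * u)"
    using assms by (intro mult_left_mono exp_ge_add_one_self) auto
  finally have "sqrt u * exp (- g * u) \<le> (1 + 2 / g) * exp ((g / 2) * u) * exp (- g * u)"
    by (intro mult_right_mono) auto
  also have "\<dots> = (1 + 2 / g) * exp (- (g / 2) * u)"
    by (simp add: mult.assoc flip: exp_add)
  finally show ?thesis .
qed

lemma exists_pos_power_le:
  fixes q :: real
  assumes "0 \<le> q" and "q < 1" and "0 < e"
  obtains m :: nat where "0 < m" and "q ^ m \<le> e"
proof -
  obtain n where "q ^ n < e" using real_arch_pow_inv[OF \<open>0 < e\<close> \<open>q < 1\<close>] by blast
  moreover have "q ^ Suc n \<le> q ^ n" using assms by (intro power_decreasing) auto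
  ultimately show thesis using that[of "Suc n"] by simp
qed

lemma exists_time_grid:
  fixes g :: "real \<Rightarrow> real"
  obtains ts :: "nat \<Rightarrow> real" where "ts 0 = 0" and "strict_mono ts" and "\<And>k. 1 \<le> ts (Suc k)"
    and "\<And>i. g (ts i) \<le> sqrt (ts (Suc i) - ts i)"
proof -
  define ts where "ts = rec_nat 0 (\<lambda>_ \<tau>. \<tau> + max 1 ((g \<tau>)\<^sup>2))"
  have ts_Suc: "ts (Suc k) = ts k + max 1 ((g (ts k))\<^sup>2)" for k by (simp add: ts_def)
  have "ts 0 = 0" by (simp add: ts_def)
  moreover have "strict_mono ts" by (rule strict_monoI_Suc) (simp add: ts_Suc)
  moreover have "1 \<le> ts (Suc k)" for k
  proof -
    have "0 \<le> ts k" by (induction k) (simp_all add: \<open>ts 0 = 0\<close> ts_Suc add_nonneg_nonneg)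
    then show ?thesis by (simp add: ts_Suc add_increasing)
  qed
  moreover have "g (ts i) \<le> sqrt (ts (Suc i) - ts i)" for i
  proof -
    have "g (ts i) \<le> sqrt ((g (ts i))\<^sup>2)" by simp
    also have "\<dots> \<le> sqrt (ts (Suc i) - ts i)" by (simp add: ts_Suc del: real_sqrt_abs)
    finally show ?thesis .
  qed
  ultimately show thesis by (rule that)
qed

definition ceiling_grid :: "nat \<Rightarrow> real \<Rightarrow> real" where
  "ceiling_grid n s = real_of_int \<lceil>real (Suc n) * s\<rceil> / real (Suc n)"

lemma ceiling_grid_ge: "s \<le> ceiling_grid n s"
  using le_of_int_ceiling[of "real (Suc n) * s"]
  by (simp add: ceiling_grid_def pos_le_divide_eq mult.commute)

lemma ceiling_grid_tendsto: "(\<lambda>n. ceiling_grid n s) \<longlonglongrightarrow> s"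
proof (rule tendsto_sandwich[where f="\<lambda>_. s" and h="\<lambda>n. s + 1 / real (Suc n)"])
  have "ceiling_grid n s \<le> s + 1 / real (Suc n)" for n
  proof -
    have "real_of_int \<lceil>real (Suc n) * s\<rceil> \<le> real (Suc n) * s + 1" by linarith
    then have "ceiling_grid n s \<le> (real (Suc n) * s + 1) / real (Suc n)"
      unfolding ceiling_grid_def by (rule divide_right_mono) simp
    also have "\<dots> = s + 1 / real (Suc n)" by (simp add: divide_simps)
    finally show ?thesis .
  qed
  then show "\<forall>\<^sub>F n in sequentially. ceiling_grid n s \<le> s + 1 / real (Suc n)" by simp
  show "\<forall>\<^sub>F n in sequentially. s \<le> ceiling_grid n s" using ceiling_grid_ge by simp
  show "(\<lambda>n. s + 1 / real (Suc n)) \<longlonglongrightarrow> s"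
    using tendsto_add[OF tendsto_const LIMSEQ_Suc[OF lim_inverse_n'], of s] by simp
qed simp

lemma first_hitting_time:
  fixes F :: "real \<Rightarrow> real"
  assumes cont: "continuous_on {0..s} F" and "F 0 < c" and "0 \<le> s" and "c \<le> F s"
  defines "\<tau> \<equiv> Inf {t. 0 \<le> t \<and> F t = c}"
  shows "0 < \<tau>" and "\<tau> \<le> s" and "F \<tau> = c" and "\<And>t. 0 \<le> t \<Longrightarrow> t < \<tau> \<Longrightarrow> F t < c"
proof -
  define Z where "Z = {0..s} \<inter> F -` {c}"
  have "closed Z" unfolding Z_def by (rule continuous_closed_preimage[OF cont]) auto
  moreover have "Z \<noteq> {}" using IVT'[of F 0 c s] assms by (auto simp: Z_def)
  moreover have "bdd_below Z" by (rule bdd_belowI[of _ 0]) (auto simp: Z_def)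
  ultimately have InfZ: "Inf Z \<in> Z" by (rule closed_contains_Inf[rotated 2])
  have "\<tau> = Inf Z"
    unfolding \<tau>_def
  proof (rule cInf_eq_minimum)
    show "Inf Z \<in> {t. 0 \<le> t \<and> F t = c}" using InfZ by (auto simp: Z_def)
    fix z assume z: "z \<in> {t. 0 \<le> t \<and> F t = c}"
    show "Inf Z \<le> z"
    proof (cases "z \<le> s")
      case True
      with z have "z \<in> Z" by (auto simp: Z_def)
      then show ?thesis by (rule cInf_lower) fact
    qed (use InfZ in \<open>auto simp: Z_def\<close>)
  qed
  with InfZ show "\<tau> \<le> s" and hit: "F \<tau> = c" by (auto simp: Z_def)
  show "F t < c" if t: "0 \<le> t" "t < \<tau>" for t
  proof (rule ccontr)
    assume "\<not> F t < c"
    moreover have "continuous_on {0..t} F"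
      using \<open>\<tau> \<le> s\<close> t by (intro continuous_on_subset[OF cont]) auto
    ultimately obtain z where "0 \<le> z" "z \<le> t" "F z = c"
      using IVT'[of F 0 c t] assms(2) t by auto
    then have "Inf Z \<le> z"
      using \<open>\<tau> \<le> s\<close> t by (intro cInf_lower \<open>bdd_below Z\<close>) (auto simp: Z_def)
    then show False using \<open>z \<le> t\<close> \<open>t < \<tau>\<close> \<open>\<tau> = Inf Z\<close> by simp
  qed
  show "0 < \<tau>"
    using InfZ hit \<open>F 0 < c\<close> \<open>\<tau> = Inf Z\<close> by (cases "\<tau> = 0") (auto simp: Z_def)
qed

lemma integral_tail_linear_bound:
  fixes f :: "real \<Rightarrow> real"
  assumes cont: "continuous_on {a..b} f"
  obtains M where "\<And>t. t \<in> {a..b} \<Longrightarrow> integral {a..b} f - integral {a..t} f \<le> M * (b - t)"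
proof -
  have "bounded (f ` {a..b})"
    by (intro compact_imp_bounded compact_continuous_image cont compact_Icc)
  then obtain M where M: "\<forall>r\<in>{a..b}. \<bar>f r\<bar> \<le> M"
    unfolding bounded_pos by auto
  have "integral {a..b} f - integral {a..t} f \<le> M * (b - t)" if t: "t \<in> {a..b}" for t
  proof -
    have "integral {a..t} f + integral {t..b} f = integral {a..b} f"
      using t by (intro Henstock_Kurzweil_Integration.integral_combine integrable_continuous_interval cont) auto
    moreover have "integral {t..b} f \<le> integral {t..b} (\<lambda>_. M)"
    proof (rule integral_le)
      show "f integrable_on {t..b}"
        using t by (intro integrable_continuous_interval continuous_on_subset[OF cont]) auto
      show "\<And>r. r \<in> {t..b} \<Longrightarrow> f r \<le> M"
        using t M by (metis abs_le_D1 atLeastAtMost_iff order_trans)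
    qed (intro integrable_continuous_interval continuous_intros)
    ultimately show ?thesis using t by (simp add: mult.commute)
  qed
  then show thesis by (rule that)
qed

lemma filterlim_integral_powr_at_left:
  fixes q :: "real \<Rightarrow> real"
  assumes "0 < \<tau>" and "1 < p" and cont: "continuous_on {0..<\<tau>} q"
    and q: "\<And>s. 0 \<le> s \<Longrightarrow> s < \<tau> \<Longrightarrow> 0 < q s \<and> q s \<le> M * (\<tau> - s)"
  shows "filterlim (\<lambda>t. integral {0..t} (\<lambda>s. q s powr (- p))) at_top (at_left \<tau>)"
proof -
  have "0 < M" using q[of 0] \<open>0 < \<tau>\<close> by (smt (verit) mult_nonpos_nonneg)
  define G where "G t = M powr (- p) * (\<tau> - t) powr (1 - p) / (p - 1)" for t
  have lower: "G t - G 0 \<le> integral {0..t} (\<lambda>s. q s powr (- p))" if t: "0 \<le> t" "t < \<tau>" for t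
  proof (rule has_integral_le)
    show "((\<lambda>s. M powr (- p) * (\<tau> - s) powr (- p)) has_integral G t - G 0) {0..t}"
    proof (rule fundamental_theorem_of_calculus[OF \<open>0 \<le> t\<close>])
      fix s assume "s \<in> {0..t}"
      then have "0 < \<tau> - s" using t by auto
      then have "(G has_real_derivative M powr (- p) * ((1 - p) * (\<tau> - s) powr (1 - p - 1) * - 1) / (p - 1))
          (at s within {0..t})"
        unfolding G_def using \<open>1 < p\<close> by (auto intro!: derivative_eq_intros)
      then have "(G has_real_derivative M powr (- p) * (\<tau> - s) powr (- p)) (at s within {0..t})"
        by (rule DERIV_cong) (use \<open>1 < p\<close> in \<open>simp add: field_simps\<close>)
      then show "(G has_vector_derivative M powr (- p) * (\<tau> - s) powr (- p)) (at s within {0..t})"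
        by (simp add: has_real_derivative_iff_has_vector_derivative)
    qed
    have "\<forall>s\<in>{0..t}. q s \<noteq> 0" using t q by force
    then have "continuous_on {0..t} (\<lambda>s. q s powr (- p))"
      using t by (intro continuous_intros continuous_on_subset[OF cont]) auto
    then show "((\<lambda>s. q s powr (- p)) has_integral integral {0..t} (\<lambda>s. q s powr (- p))) {0..t}"
      by (intro integrable_integral integrable_continuous_interval)
    fix s assume s: "s \<in> {0..t}"
    then have "(M * (\<tau> - s)) powr (- p) \<le> q s powr (- p)"
      using q[of s] t \<open>1 < p\<close> by (intro powr_mono2') auto
    then show "M powr (- p) * (\<tau> - s) powr (- p) \<le> q s powr (- p)"
      using \<open>0 < M\<close> s t by (simp add: powr_mult)
  qed
  have "eventually (\<lambda>t. G t - G 0 \<le> integral {0..t} (\<lambda>s. q s powr (- p))) (at_left \<tau>)"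
    using eventually_at_left_real[OF \<open>0 < \<tau>\<close>] by (rule eventually_mono) (simp add: lower)
  moreover have "filterlim (\<lambda>t. G t - G 0) at_top (at_left \<tau>)"
    unfolding G_def using \<open>0 < M\<close> \<open>0 < \<tau>\<close> \<open>1 < p\<close> by real_asymp
  ultimately show ?thesis by (rule filterlim_at_top_mono[rotated])
qed

section \<open>Exponentially weighted integrals of a path\<close>

definition exp_conv :: "real \<Rightarrow> (real \<Rightarrow> real) \<Rightarrow> real \<Rightarrow> real" where
  "exp_conv \<gamma> b t = integral {0..t} (\<lambda>s. exp (- \<gamma> * (t - s)) * b s)"

lemma exp_conv_0 [simp]: "exp_conv \<gamma> b 0 = 0"
  by (simp add: exp_conv_def)

lemma exp_conv_eq: "exp_conv \<gamma> b t = exp (- \<gamma> * t) * integral {0..t} (\<lambda>s. exp (\<gamma> * s) * b s)"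
proof -
  have "(\<lambda>s. exp (- \<gamma> * (t - s)) * b s) = (\<lambda>s. exp (- \<gamma> * t) * (exp (\<gamma> * s) * b s))"
    by (auto simp: fun_eq_iff mult_exp_exp algebra_simps)
  then show ?thesis by (simp add: exp_conv_def)
qed

lemma exp_conv_has_real_derivative:
  assumes "continuous_on {0..T} b" and "r \<in> {0..T}"
  shows "(exp_conv \<gamma> b has_real_derivative b r - \<gamma> * exp_conv \<gamma> b r) (at r within {0..T})"
proof -
  have "((\<lambda>u. integral {0..u} (\<lambda>s. exp (\<gamma> * s) * b s)) has_real_derivative exp (\<gamma> * r) * b r)
      (at r within {0..T})"
    by (intro integral_has_real_derivative continuous_intros assms)
  from DERIV_mult[OF _ this, of "\<lambda>u. exp (- \<gamma> * u)" "- \<gamma> * exp (- \<gamma> * r)"]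
  show ?thesis unfolding exp_conv_eq[abs_def]
    by (rule DERIV_cong) (auto intro!: derivative_eq_intros simp: algebra_simps mult_exp_exp)
qed

lemma continuous_on_exp_conv:
  assumes "continuous_on {0..T} b"
  shows "continuous_on {0..T} (exp_conv \<gamma> b)"
  using DERIV_continuous_on[OF exp_conv_has_real_derivative[OF assms]] .

lemma exp_conv_ge:
  assumes "\<gamma> \<noteq> 0" and "0 \<le> t" and "continuous_on {0..t} b"
  shows "(1 - exp (- \<gamma> * t)) / \<gamma> * b t - integral {0..t} (\<lambda>s. exp (- \<gamma> * (t - s)) * \<bar>b t - b s\<bar>)
      \<le> exp_conv \<gamma> b t"
proof -
  have int_const: "(\<lambda>s. exp (- \<gamma> * (t - s)) * b t) integrable_on {0..t}"
    and int_abs: "(\<lambda>s. exp (- \<gamma> * (t - s)) * \<bar>b t - b s\<bar>) integrable_on {0..t}"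
    and int_b: "(\<lambda>s. exp (- \<gamma> * (t - s)) * b s) integrable_on {0..t}"
    by (intro integrable_continuous_interval continuous_intros assms)+
  have const: "(1 - exp (- \<gamma> * t)) / \<gamma> * b t = integral {0..t} (\<lambda>s. exp (- \<gamma> * (t - s)) * b t)"
    using integral_unique[OF has_integral_mult_left[OF has_integral_exp_decay[OF assms(1,2)]]]
    by (simp add: mult.commute)
  have "(1 - exp (- \<gamma> * t)) / \<gamma> * b t - integral {0..t} (\<lambda>s. exp (- \<gamma> * (t - s)) * \<bar>b t - b s\<bar>)
      = integral {0..t} (\<lambda>s. exp (- \<gamma> * (t - s)) * b t - exp (- \<gamma> * (t - s)) * \<bar>b t - b s\<bar>)"
    unfolding const integral_diff[OF int_const int_abs] ..
  also have "\<dots> \<le> exp_conv \<gamma> b t"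
    unfolding exp_conv_def
  proof (rule integral_le[OF integrable_diff[OF int_const int_abs] int_b])
    fix s
    have "exp (- \<gamma> * (t - s)) * (b t - b s) \<le> exp (- \<gamma> * (t - s)) * \<bar>b t - b s\<bar>"
      by (intro mult_left_mono) auto
    then show "exp (- \<gamma> * (t - s)) * b t - exp (- \<gamma> * (t - s)) * \<bar>b t - b s\<bar> \<le> exp (- \<gamma> * (t - s)) * b s"
      by (simp add: algebra_simps)
  qed
  finally show ?thesis .
qed

lemma path_less_if_exp_conv_le:
  fixes b :: "real \<Rightarrow> real"
  assumes "0 < \<gamma>" and "1 \<le> t" and "continuous_on {0..t} b" and "exp_conv \<gamma> b t \<le> K"
    and "integral {0..t} (\<lambda>s. exp (- \<gamma> * (t - s)) * \<bar>b t - b s\<bar>) < a"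
  shows "b t < \<bar>K + a\<bar> / ((1 - exp (- \<gamma>)) / \<gamma>)"
proof -
  define c where "c = (1 - exp (- \<gamma> * t)) / \<gamma>"
  have c_ge: "(1 - exp (- \<gamma>)) / \<gamma> \<le> c"
    using assms(1,2) unfolding c_def by (intro divide_right_mono) auto
  moreover have pos: "0 < (1 - exp (- \<gamma>)) / \<gamma>" using assms(1) by simp
  moreover have "c * b t < K + a"
    using exp_conv_ge[of \<gamma> t b] assms unfolding c_def by fastforce
  ultimately have "b t < \<bar>K + a\<bar> / c" by (simp add: field_simps)
  also have "\<dots> \<le> \<bar>K + a\<bar> / ((1 - exp (- \<gamma>)) / \<gamma>)"
    using c_ge pos by (intro divide_left_mono mult_pos_pos) auto
  finally show ?thesis .
qed

section \<open>Explosion of the clock along one path\<close>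

lemma yhat_has_integral:
  assumes "\<gamma> \<noteq> 0" and "0 \<le> t" and "continuous_on {0..t} (\<lambda>s. B s \<omega>)" and "B 0 \<omega> = 0"
  shows "((\<lambda>r. yhat \<gamma> D y B r \<omega>) has_integral
      y \<omega> * (1 - exp (- \<gamma> * t)) / \<gamma> + sqrt (2 * D) * exp_conv \<gamma> (\<lambda>s. B s \<omega>) t) {0..t}"
proof -
  define F where "F r = y \<omega> * (1 - exp (- \<gamma> * r)) / \<gamma> + sqrt (2 * D) * exp_conv \<gamma> (\<lambda>s. B s \<omega>) r" for r
  have "((\<lambda>r. yhat \<gamma> D y B r \<omega>) has_integral (F t - F 0)) {0..t}"
  proof (rule fundamental_theorem_of_calculus[OF \<open>0 \<le> t\<close>])
    fix r assume r: "r \<in> {0..t}"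
    note conv' = exp_conv_has_real_derivative[OF assms(3) r, of \<gamma>]
    have "(F has_real_derivative y \<omega> * (\<gamma> * exp (- \<gamma> * r)) / \<gamma>
        + sqrt (2 * D) * (B r \<omega> - \<gamma> * exp_conv \<gamma> (\<lambda>s. B s \<omega>) r)) (at r within {0..t})"
      unfolding F_def using assms(1) by (auto intro!: derivative_eq_intros conv')
    then show "(F has_vector_derivative yhat \<gamma> D y B r \<omega>) (at r within {0..t})"
      using assms by (simp add: has_real_derivative_iff_has_vector_derivative yhat_def exp_conv_def algebra_simps)
  qed
  then show ?thesis by (simp add: F_def)
qed

lemma continuous_on_yhat:
  assumes "continuous_on {0..T} (\<lambda>t. B t \<omega>)"
  shows "continuous_on {0..T} (\<lambda>r. yhat \<gamma> D y B r \<omega>)"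
  using continuous_on_exp_conv[OF assms, of \<gamma>] unfolding yhat_def exp_conv_def
  by (intro continuous_intros assms)

lemma exists_integral_yhat_ge:
  assumes "0 < \<gamma>" and "0 < D" and "B 0 \<omega> = 0" and cont: "continuous_on {0..} (\<lambda>t. B t \<omega>)"
    and unbounded: "\<And>K. \<exists>t\<ge>0. K < exp_conv \<gamma> (\<lambda>s. B s \<omega>) t"
  obtains s where "0 \<le> s" and "c \<le> integral {0..s} (\<lambda>r. yhat \<gamma> D y B r \<omega>)"
proof -
  obtain s where "0 \<le> s" and s: "(c + \<bar>y \<omega>\<bar> / \<gamma>) / sqrt (2 * D) < exp_conv \<gamma> (\<lambda>s. B s \<omega>) s"
    using unbounded by blast
  have "\<bar>y \<omega> * (1 - exp (- \<gamma> * s))\<bar> \<le> \<bar>y \<omega>\<bar>"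
    using \<open>0 < \<gamma>\<close> \<open>0 \<le> s\<close> by (simp add: abs_mult mult_left_le)
  then have "- \<bar>y \<omega>\<bar> / \<gamma> \<le> y \<omega> * (1 - exp (- \<gamma> * s)) / \<gamma>"
    using \<open>0 < \<gamma>\<close> by (simp add: divide_le_eq_1 field_simps)
  moreover have "c + \<bar>y \<omega>\<bar> / \<gamma> < sqrt (2 * D) * exp_conv \<gamma> (\<lambda>s. B s \<omega>) s"
    using s \<open>0 < D\<close> by (simp add: field_simps)
  moreover have "integral {0..s} (\<lambda>r. yhat \<gamma> D y B r \<omega>)
      = y \<omega> * (1 - exp (- \<gamma> * s)) / \<gamma> + sqrt (2 * D) * exp_conv \<gamma> (\<lambda>s. B s \<omega>) s"
    using assms \<open>0 \<le> s\<close> continuous_on_subset[OF cont, of "{0..s}"]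
    by (intro integral_unique yhat_has_integral) auto
  ultimately show thesis using that[OF \<open>0 \<le> s\<close>] by linarith
qed

lemma xhat_power_4:
  assumes "0 < x \<omega> powr (- 3) - 3 * integral {0..t} (\<lambda>r. yhat \<gamma> D y B r \<omega>)"
  shows "xhat \<gamma> D x y B t \<omega> ^ 4 = (x \<omega> powr (- 3) - 3 * integral {0..t} (\<lambda>r. yhat \<gamma> D y B r \<omega>)) powr - (4 / 3)"
  using assms by (simp add: xhat_def powr_power)

lemma Tclock_tendsto_PInfty_if_exp_conv_unbounded:
  assumes "0 < \<gamma>" and "0 < D" and "0 < x \<omega>" and "B 0 \<omega> = 0"
    and cont: "continuous_on {0..} (\<lambda>t. B t \<omega>)"
    and "\<And>K. \<exists>t\<ge>0. K < exp_conv \<gamma> (\<lambda>s. B s \<omega>) t"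
  shows "((\<lambda>t. Tclock \<gamma> D x y B t \<omega>) \<longlongrightarrow> \<infinity>) (at_left (tau \<gamma> D x y B \<omega>))"
proof -
  define F where "F t = integral {0..t} (\<lambda>r. yhat \<gamma> D y B r \<omega>)" for t
  define c where "c = x \<omega> powr (- 3) / 3"
  define \<tau> where "\<tau> = tau \<gamma> D x y B \<omega>"
  have yhat_cont: "continuous_on {0..T} (\<lambda>r. yhat \<gamma> D y B r \<omega>)" for T
    by (intro continuous_on_yhat continuous_on_subset[OF cont]) auto
  obtain s where s: "0 \<le> s" "c \<le> F s"
    using exists_integral_yhat_ge[where c=c and B=B and \<omega>=\<omega> and y=y, OF assms(1,2,4,5,6)]
    unfolding F_def by blast
  have F_cont: "continuous_on {0..s} F"
    unfolding F_def by (intro indefinite_integral_continuous_1 integrable_continuous_interval yhat_cont)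
  have "F 0 < c" using \<open>0 < x \<omega>\<close> by (simp add: F_def c_def)
  have "\<tau> = Inf {t. 0 \<le> t \<and> F t = c}" by (simp add: \<tau>_def tau_def F_def c_def)
  note hit = first_hitting_time[OF F_cont \<open>F 0 < c\<close> s, folded this]
  have pos: "0 < x \<omega> powr (- 3) - 3 * F r" if "0 \<le> r" "r < \<tau>" for r
    using hit(4)[OF that] by (simp add: c_def)
  obtain M where M: "\<And>t. t \<in> {0..\<tau>} \<Longrightarrow> F \<tau> - F t \<le> M * (\<tau> - t)"
    using integral_tail_linear_bound[OF yhat_cont] unfolding F_def by blast
  have "filterlim (\<lambda>t. integral {0..t} (\<lambda>r. (x \<omega> powr (- 3) - 3 * F r) powr - (4 / 3))) at_top (at_left \<tau>)"
  proof (rule filterlim_integral_powr_at_left)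
    show "continuous_on {0..<\<tau>} (\<lambda>r. x \<omega> powr (- 3) - 3 * F r)"
      using hit(2) by (intro continuous_intros continuous_on_subset[OF F_cont]) auto
    fix r assume "0 \<le> r" "r < \<tau>"
    then show "0 < x \<omega> powr (- 3) - 3 * F r \<and> x \<omega> powr (- 3) - 3 * F r \<le> 3 * M * (\<tau> - r)"
      using pos[of r] hit(3) M[of r] by (auto simp: c_def)
  qed (use hit(1) in auto)
  moreover have "eventually (\<lambda>t. ereal (integral {0..t} (\<lambda>r. (x \<omega> powr (- 3) - 3 * F r) powr - (4 / 3)))
      = Tclock \<gamma> D x y B t \<omega>) (at_left \<tau>)"
    using eventually_at_left_real[OF hit(1)]
  proof (rule eventually_mono)
    fix t assume t: "t \<in> {0<..<\<tau>}"
    have "integral {0..t} (\<lambda>r. (x \<omega> powr (- 3) - 3 * F r) powr - (4 / 3))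
        = integral {0..t} (\<lambda>r. xhat \<gamma> D x y B r \<omega> ^ 4)"
      using pos t unfolding F_def by (intro integral_cong xhat_power_4[symmetric]) auto
    then show "ereal (integral {0..t} (\<lambda>r. (x \<omega> powr (- 3) - 3 * F r) powr - (4 / 3))) = Tclock \<gamma> D x y B t \<omega>"
      using t by (simp add: Tclock_def \<tau>_def)
  qed
  ultimately show ?thesis
    unfolding \<tau>_def[symmetric]
    by (auto simp: tendsto_PInfty_eq_at_top[symmetric] elim: tendsto_cong[THEN iffD1, rotated])
qed

section \<open>Gaussian and Brownian estimates\<close>

lemma nn_integral_normal_abs:
  assumes "0 < \<sigma>"
  shows "(\<integral>\<^sup>+x. ennreal (normal_density 0 \<sigma> x) * ennreal \<bar>x\<bar> \<partial>lborel) = ennreal (\<sigma> * sqrt (2 / pi))"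
proof -
  have moment: "has_bochner_integral lborel (\<lambda>x. normal_density 0 \<sigma> x * \<bar>x\<bar>) (\<sigma> * sqrt (2 / pi))"
    using normal_moment_abs_odd[where \<mu>=0 and \<sigma>=\<sigma> and k=0] assms by simp
  have "(\<integral>\<^sup>+x. ennreal (normal_density 0 \<sigma> x) * ennreal \<bar>x\<bar> \<partial>lborel)
      = (\<integral>\<^sup>+x. ennreal (normal_density 0 \<sigma> x * \<bar>x\<bar>) \<partial>lborel)"
    by (simp add: ennreal_mult)
  also have "\<dots> = ennreal (\<sigma> * sqrt (2 / pi))"
    using nn_integral_eq_integral[OF integrable.intros[OF moment]]
    by (simp add: has_bochner_integral_integral_eq[OF moment])
  finally show ?thesis .
qed

lemma nn_integral_normal_interval_ge:
  assumes "0 < \<sigma>"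
  shows "ennreal (exp (- 2) / sqrt (2 * pi))
    \<le> (\<integral>\<^sup>+x. ennreal (normal_density 0 \<sigma> x) * indicator {\<sigma><..2 * \<sigma>} x \<partial>lborel)"
proof -
  have density_ge: "exp (- 2) / sqrt (2 * pi) / \<sigma> \<le> normal_density 0 \<sigma> x" if "x \<in> {\<sigma><..2 * \<sigma>}" for x
  proof -
    have "x\<^sup>2 \<le> (2 * \<sigma>)\<^sup>2" using that assms by (intro power_mono) auto
    then have "exp (- 2) \<le> exp (- x\<^sup>2 / (2 * \<sigma>\<^sup>2))" using assms by (simp add: field_simps power2_eq_square)
    moreover have "normal_density 0 \<sigma> x = exp (- x\<^sup>2 / (2 * \<sigma>\<^sup>2)) / (sqrt (2 * pi) * \<sigma>)"
      using assms by (simp add: normal_density_def real_sqrt_mult)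
    ultimately show ?thesis using assms by (simp add: divide_right_mono)
  qed
  have "ennreal (exp (- 2) / sqrt (2 * pi)) = ennreal (exp (- 2) / sqrt (2 * pi) / \<sigma>) * ennreal \<sigma>"
    using assms by (simp flip: ennreal_mult)
  also have "\<dots> = (\<integral>\<^sup>+x. ennreal (exp (- 2) / sqrt (2 * pi) / \<sigma>) * indicator {\<sigma><..2 * \<sigma>} x \<partial>lborel)"
    using assms by (simp add: nn_integral_cmult_indicator)
  also have "\<dots> \<le> (\<integral>\<^sup>+x. ennreal (normal_density 0 \<sigma> x) * indicator {\<sigma><..2 * \<sigma>} x \<partial>lborel)"
  proof (rule nn_integral_mono)
    fix x
    show "ennreal (exp (- 2) / sqrt (2 * pi) / \<sigma>) * indicator {\<sigma><..2 * \<sigma>} x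
        \<le> ennreal (normal_density 0 \<sigma> x) * indicator {\<sigma><..2 * \<sigma>} x"
      using density_ge[of x] by (cases "x \<in> {\<sigma><..2 * \<sigma>}") (simp_all add: ennreal_leI)
  qed
  finally show ?thesis .
qed

lemma measurable_process_at_ceiling_grid:
  fixes B :: "real \<Rightarrow> 'a \<Rightarrow> real"
  assumes G: "G \<in> sets M" and meas: "\<And>t. 0 \<le> t \<Longrightarrow> B t \<in> borel_measurable M"
  shows "(\<lambda>p. if fst p \<in> G \<and> 0 \<le> snd p then B (ceiling_grid n (snd p)) (fst p) else 0)
    \<in> borel_measurable (M \<Otimes>\<^sub>M (lborel :: real measure))"
proof -
  have "{p \<in> space (M \<Otimes>\<^sub>M (lborel :: real measure)). fst p \<in> G \<and> 0 \<le> snd p} = G \<times> {0..}"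
    using sets.sets_into_space[OF G] by (auto simp: space_pair_measure)
  also have "\<dots> \<in> sets (M \<Otimes>\<^sub>M (lborel :: real measure))"
    using G by (intro pair_measureI) (simp_all add: atLeast_borel)
  finally have [measurable]: "Measurable.pred (M \<Otimes>\<^sub>M (lborel :: real measure)) (\<lambda>p. fst p \<in> G \<and> 0 \<le> snd p)"
    unfolding pred_def .
  have meas_fixed: "(\<lambda>p. if fst p \<in> G \<and> 0 \<le> snd p then B (max 0 (real_of_int i / real (Suc n))) (fst p) else 0)
      \<in> borel_measurable (M \<Otimes>\<^sub>M (lborel :: real measure))" for i :: int
  proof -
    have [measurable]: "B (max 0 (real_of_int i / real (Suc n))) \<in> borel_measurable M" by (rule meas) simp
    show ?thesis by measurable
  qed
  have meas_index: "(\<lambda>p. \<lceil>real (Suc n) * snd p\<rceil>) \<in> measurable (M \<Otimes>\<^sub>M (lborel :: real measure)) (count_space UNIV)"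
    by measurable
  have "(\<lambda>p. (\<lambda>i p. if fst p \<in> G \<and> 0 \<le> snd p
      then B (max 0 (real_of_int i / real (Suc n))) (fst p) else 0) \<lceil>real (Suc n) * snd p\<rceil> p)
      \<in> borel_measurable (M \<Otimes>\<^sub>M (lborel :: real measure))"
    by (rule measurable_compose_countable'[where I=UNIV]) (use meas_fixed meas_index in auto)
  moreover have "max 0 (ceiling_grid n s) = ceiling_grid n s" if "0 \<le> s" for s
    using ceiling_grid_ge[of s n] that by linarith
  then have "(\<lambda>p. if fst p \<in> G \<and> 0 \<le> snd p then B (ceiling_grid n (snd p)) (fst p) else 0)
      = (\<lambda>p. if fst p \<in> G \<and> 0 \<le> snd p
          then B (max 0 (real_of_int \<lceil>real (Suc n) * snd p\<rceil> / real (Suc n))) (fst p) else 0)"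
    by (auto simp: fun_eq_iff ceiling_grid_def)
  ultimately show ?thesis by simp
qed

lemma measurable_process_continuous_paths:
  fixes B :: "real \<Rightarrow> 'a \<Rightarrow> real"
  assumes G: "G \<in> sets M" and meas: "\<And>t. 0 \<le> t \<Longrightarrow> B t \<in> borel_measurable M"
    and cont: "\<And>\<omega>. \<omega> \<in> G \<Longrightarrow> continuous_on {0..} (\<lambda>t. B t \<omega>)"
  shows "(\<lambda>p. if fst p \<in> G \<and> 0 \<le> snd p then B (snd p) (fst p) else 0) \<in> borel_measurable (M \<Otimes>\<^sub>M lborel)"
proof (rule borel_measurable_LIMSEQ_real)
  fix p :: "'a \<times> real"
  show "(\<lambda>n. if fst p \<in> G \<and> 0 \<le> snd p then B (ceiling_grid n (snd p)) (fst p) else 0)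
      \<longlonglongrightarrow> (if fst p \<in> G \<and> 0 \<le> snd p then B (snd p) (fst p) else 0)"
  proof (cases "fst p \<in> G \<and> 0 \<le> snd p")
    case True
    have "(\<lambda>n. B (ceiling_grid n (snd p)) (fst p)) \<longlonglongrightarrow> B (snd p) (fst p)"
    proof (rule continuous_on_tendsto_compose[OF cont ceiling_grid_tendsto])
      show "\<forall>\<^sub>F n in sequentially. ceiling_grid n (snd p) \<in> {0..}"
        using True ceiling_grid_ge[of "snd p"] by (intro always_eventually) (auto intro: order_trans)
    qed (use True in auto)
    with True show ?thesis by simp
  next
    case False
    show ?thesis unfolding if_not_P[OF False] by simp
  qed
qed (rule measurable_process_at_ceiling_grid[OF G meas])

context prob_space
begin

lemma std_brownian_motionD:
  assumes "std_brownian_motion M B"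
  shows std_brownian_motion_measurable: "\<And>t. 0 \<le> t \<Longrightarrow> B t \<in> borel_measurable M"
    and std_brownian_motion_AE_paths: "AE \<omega> in M. B 0 \<omega> = 0 \<and> continuous_on {0..} (\<lambda>t. B t \<omega>)"
    and std_brownian_motion_indep_increments: "\<And>ts n. 0 \<le> ts 0 \<Longrightarrow> strict_mono ts \<Longrightarrow>
      indep_vars (\<lambda>_. borel) (\<lambda>i \<omega>. B (ts (Suc i)) \<omega> - B (ts i) \<omega>) {..<n}"
    and std_brownian_motion_increment_distributed: "\<And>s t. 0 \<le> s \<Longrightarrow> s < t \<Longrightarrow>
      distributed M lborel (\<lambda>\<omega>. B t \<omega> - B s \<omega>) (\<lambda>z. ennreal (normal_density 0 (sqrt (t - s)) z))"
  using assms unfolding std_brownian_motion_def by auto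

lemma prob_nn_integral_Markov:
  assumes "g \<in> borel_measurable M" and "0 < a" and "0 \<le> C" and "(\<integral>\<^sup>+\<omega>. g \<omega> \<partial>M) \<le> ennreal C"
  shows "prob {\<omega>\<in>space M. ennreal a \<le> g \<omega>} \<le> C / a"
proof -
  define S where "S = {\<omega>\<in>space M. ennreal a \<le> g \<omega>}"
  have "S \<in> events" unfolding S_def using assms(1) by measurable
  then have "ennreal (a * prob S) = (\<integral>\<^sup>+\<omega>. ennreal a * indicator S \<omega> \<partial>M)"
    using assms(2) by (simp add: nn_integral_cmult_indicator emeasure_eq_measure ennreal_mult)
  also have "\<dots> \<le> (\<integral>\<^sup>+\<omega>. g \<omega> \<partial>M)"
    by (intro nn_integral_mono) (auto simp: S_def indicator_def)
  finally have "ennreal (a * prob S) \<le> ennreal C" using assms(4) by (rule order_trans)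
  then have "a * prob S \<le> C" using assms(3) by (simp add: ennreal_le_iff)
  then show ?thesis using assms(2) by (simp add: S_def field_simps)
qed

lemma prob_UN_nn_integral_Markov:
  assumes "finite I" and "0 < a" and "0 \<le> C" and meas: "\<And>k. k \<in> I \<Longrightarrow> R k \<in> borel_measurable M"
    and int: "\<And>k. k \<in> I \<Longrightarrow> (\<integral>\<^sup>+\<omega>. R k \<omega> \<partial>M) \<le> ennreal C"
  shows "(\<Union>k\<in>I. {\<omega>\<in>space M. ennreal a \<le> R k \<omega>}) \<in> events"
    and "prob (\<Union>k\<in>I. {\<omega>\<in>space M. ennreal a \<le> R k \<omega>}) \<le> real (card I) * C / a"
proof -
  have events: "{\<omega>\<in>space M. ennreal a \<le> R k \<omega>} \<in> events" if "k \<in> I" for k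
  proof -
    have [measurable]: "R k \<in> borel_measurable M" using meas[OF that] .
    show ?thesis by measurable
  qed
  then show "(\<Union>k\<in>I. {\<omega>\<in>space M. ennreal a \<le> R k \<omega>}) \<in> events"
    using \<open>finite I\<close> by (intro sets.finite_UN) auto
  from events have "prob (\<Union>k\<in>I. {\<omega>\<in>space M. ennreal a \<le> R k \<omega>}) \<le> (\<Sum>k\<in>I. prob {\<omega>\<in>space M. ennreal a \<le> R k \<omega>})"
    using \<open>finite I\<close> by (intro finite_measure_subadditive_finite) auto
  also have "\<dots> \<le> (\<Sum>k\<in>I. C / a)"
    using assms by (intro sum_mono prob_nn_integral_Markov) auto
  finally show "prob (\<Union>k\<in>I. {\<omega>\<in>space M. ennreal a \<le> R k \<omega>}) \<le> real (card I) * C / a" by simp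
qed

lemma nn_integral_abs_increment:
  assumes "std_brownian_motion M B" and "0 \<le> s" and "s < t"
  shows "(\<integral>\<^sup>+\<omega>. ennreal \<bar>B t \<omega> - B s \<omega>\<bar> \<partial>M) = ennreal (sqrt (t - s) * sqrt (2 / pi))"
proof -
  have "(\<integral>\<^sup>+\<omega>. ennreal \<bar>B t \<omega> - B s \<omega>\<bar> \<partial>M)
      = (\<integral>\<^sup>+x. ennreal (normal_density 0 (sqrt (t - s)) x) * ennreal \<bar>x\<bar> \<partial>lborel)"
    by (rule distributed_nn_integral[symmetric, OF std_brownian_motion_increment_distributed[OF assms]]) simp
  then show ?thesis using nn_integral_normal_abs[of "sqrt (t - s)"] assms by simp
qed

lemma prob_abs_increment_ge:
  assumes bm: "std_brownian_motion M B" and "0 \<le> s" and "s < t" and "0 < L"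
  shows "prob {\<omega>\<in>space M. L \<le> \<bar>B t \<omega> - B s \<omega>\<bar>} \<le> sqrt (t - s) / L"
proof -
  have [measurable]: "B t \<in> borel_measurable M" "B s \<in> borel_measurable M"
    using std_brownian_motion_measurable[OF bm] assms by auto
  have "sqrt (2 / pi) \<le> 1" using pi_gt3 by simp
  then have "(\<integral>\<^sup>+\<omega>. ennreal \<bar>B t \<omega> - B s \<omega>\<bar> \<partial>M) \<le> ennreal (sqrt (t - s))"
    unfolding nn_integral_abs_increment[OF bm assms(2,3)] using assms
    by (intro ennreal_leI) (simp add: mult_left_le)
  then have "prob {\<omega>\<in>space M. ennreal L \<le> ennreal \<bar>B t \<omega> - B s \<omega>\<bar>} \<le> sqrt (t - s) / L"
    using assms by (intro prob_nn_integral_Markov) auto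
  then show ?thesis by (simp add: ennreal_le_iff)
qed

lemma prob_UN_abs_increment_ge:
  assumes bm: "std_brownian_motion M B" and "finite I" and "0 < c" and t: "\<And>j. j \<in> I \<Longrightarrow> 0 < t j"
  shows "prob (\<Union>j\<in>I. {\<omega>\<in>space M. c * sqrt (t j) \<le> \<bar>B (t j) \<omega> - B 0 \<omega>\<bar>}) \<le> card I / c"
proof -
  have [measurable]: "B 0 \<in> borel_measurable M"
    by (rule std_brownian_motion_measurable[OF bm]) simp
  have "{\<omega>\<in>space M. c * sqrt (t j) \<le> \<bar>B (t j) \<omega> - B 0 \<omega>\<bar>} \<in> events" if "j \<in> I" for j
  proof -
    have [measurable]: "B (t j) \<in> borel_measurable M"
      using std_brownian_motion_measurable[OF bm] t[OF that] by simp
    show ?thesis by measurable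
  qed
  then have "prob (\<Union>j\<in>I. {\<omega>\<in>space M. c * sqrt (t j) \<le> \<bar>B (t j) \<omega> - B 0 \<omega>\<bar>})
      \<le> (\<Sum>j\<in>I. prob {\<omega>\<in>space M. c * sqrt (t j) \<le> \<bar>B (t j) \<omega> - B 0 \<omega>\<bar>})"
    using \<open>finite I\<close> by (intro finite_measure_subadditive_finite) auto
  also have "\<dots> \<le> (\<Sum>j\<in>I. 1 / c)"
  proof (rule sum_mono)
    fix j assume "j \<in> I"
    then have "prob {\<omega>\<in>space M. c * sqrt (t j) \<le> \<bar>B (t j) \<omega> - B 0 \<omega>\<bar>} \<le> sqrt (t j - 0) / (c * sqrt (t j))"
      using t \<open>0 < c\<close> by (intro prob_abs_increment_ge[OF bm]) auto
    then show "prob {\<omega>\<in>space M. c * sqrt (t j) \<le> \<bar>B (t j) \<omega> - B 0 \<omega>\<bar>} \<le> 1 / c"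
      using t[OF \<open>j \<in> I\<close>] by simp
  qed
  finally show ?thesis by simp
qed

lemma prob_increment_le:
  assumes bm: "std_brownian_motion M B" and "0 \<le> s" and "s < t" and "\<beta> \<le> sqrt (t - s)"
  shows "prob {\<omega>\<in>space M. B t \<omega> - B s \<omega> \<le> \<beta>} \<le> 1 - exp (- 2) / sqrt (2 * pi)"
proof -
  have [measurable]: "B t \<in> borel_measurable M" "B s \<in> borel_measurable M"
    using std_brownian_motion_measurable[OF bm] assms by auto
  define \<sigma> where "\<sigma> = sqrt (t - s)"
  have "0 < \<sigma>" using assms by (simp add: \<sigma>_def)
  define A where "A = {\<omega>\<in>space M. B t \<omega> - B s \<omega> \<le> \<beta>}"
  define C where "C = (\<lambda>\<omega>. B t \<omega> - B s \<omega>) -` {\<sigma><..2 * \<sigma>} \<inter> space M"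
  have "emeasure M C = (\<integral>\<^sup>+x. ennreal (normal_density 0 \<sigma> x) * indicator {\<sigma><..2 * \<sigma>} x \<partial>lborel)"
    unfolding C_def \<sigma>_def
    by (rule distributed_emeasure[OF std_brownian_motion_increment_distributed[OF bm assms(2,3)]]) simp
  then have "ennreal (exp (- 2) / sqrt (2 * pi)) \<le> ennreal (prob C)"
    using nn_integral_normal_interval_ge[OF \<open>0 < \<sigma>\<close>] by (simp add: emeasure_eq_measure)
  then have "exp (- 2) / sqrt (2 * pi) \<le> prob C" by (simp add: ennreal_le_iff[OF measure_nonneg])
  moreover have "A \<inter> C = {}" using assms by (auto simp: A_def C_def \<sigma>_def)
  moreover have "A \<in> events" "C \<in> events" unfolding A_def C_def by measurable
  ultimately have "prob A + exp (- 2) / sqrt (2 * pi) \<le> prob (A \<union> C)"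
    by (simp add: finite_measure_Union)
  then show ?thesis using prob_le_1[of "A \<union> C"] unfolding A_def by linarith
qed

lemma prob_increments_le:
  assumes bm: "std_brownian_motion M B" and "ts 0 = 0" and mono: "strict_mono ts" and "0 < m"
    and \<beta>: "\<And>i. \<beta> i \<le> sqrt (ts (Suc i) - ts i)"
  shows "prob {\<omega>\<in>space M. \<forall>i<m. B (ts (Suc i)) \<omega> - B (ts i) \<omega> \<le> \<beta> i} \<le> (1 - exp (- 2) / sqrt (2 * pi)) ^ m"
proof -
  define E where "E i = (\<lambda>\<omega>. B (ts (Suc i)) \<omega> - B (ts i) \<omega>) -` {..\<beta> i} \<inter> space M" for i
  have "indep_sets (\<lambda>i. {(\<lambda>\<omega>. B (ts (Suc i)) \<omega> - B (ts i) \<omega>) -` A \<inter> space M | A. A \<in> sets borel}) {..<m}"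
    using std_brownian_motion_indep_increments[OF bm, of ts m] assms unfolding indep_vars_def2 by simp
  moreover have "E i \<in> {(\<lambda>\<omega>. B (ts (Suc i)) \<omega> - B (ts i) \<omega>) -` A \<inter> space M | A. A \<in> sets borel}" for i
    unfolding E_def by (intro CollectI exI[of _ "{..\<beta> i}"]) auto
  moreover have "{\<omega>\<in>space M. \<forall>i<m. B (ts (Suc i)) \<omega> - B (ts i) \<omega> \<le> \<beta> i} = (\<Inter>i\<in>{..<m}. E i)"
    using \<open>0 < m\<close> by (auto simp: E_def)
  ultimately have "prob {\<omega>\<in>space M. \<forall>i<m. B (ts (Suc i)) \<omega> - B (ts i) \<omega> \<le> \<beta> i} = (\<Prod>i\<in>{..<m}. prob (E i))"
    using \<open>0 < m\<close> by (auto intro!: indep_setsD)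
  also have "\<dots> \<le> (\<Prod>i\<in>{..<m}. 1 - exp (- 2) / sqrt (2 * pi))"
  proof (intro prod_mono conjI)
    fix i
    have "0 \<le> ts i" using mono \<open>ts 0 = 0\<close> by (metis le0 strict_mono_less_eq)
    moreover have "ts i < ts (Suc i)" using mono by (simp add: strict_mono_def)
    ultimately show "prob (E i) \<le> 1 - exp (- 2) / sqrt (2 * pi)"
      using prob_increment_le[OF bm _ _ \<beta>] unfolding E_def vimage_def by (simp add: Int_def conj_commute)
  qed simp
  finally show ?thesis by simp
qed

lemma nn_integral_weighted_abs_increment_le:
  assumes bm: "std_brownian_motion M B" and "0 < \<gamma>" and "0 \<le> s" and "s < t"
  shows "(\<integral>\<^sup>+\<omega>. ennreal (exp (- \<gamma> * (t - s)) * \<bar>B t \<omega> - B s \<omega>\<bar>) \<partial>M)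
    \<le> ennreal ((1 + 2 / \<gamma>) * exp (- (\<gamma> / 2) * (t - s)))"
proof -
  have [measurable]: "B t \<in> borel_measurable M" "B s \<in> borel_measurable M"
    using std_brownian_motion_measurable[OF bm] assms by auto
  have "(\<integral>\<^sup>+\<omega>. ennreal (exp (- \<gamma> * (t - s)) * \<bar>B t \<omega> - B s \<omega>\<bar>) \<partial>M)
      = ennreal (exp (- \<gamma> * (t - s))) * (\<integral>\<^sup>+\<omega>. ennreal \<bar>B t \<omega> - B s \<omega>\<bar> \<partial>M)"
    by (simp add: ennreal_mult nn_integral_cmult)
  also have "\<dots> = ennreal (exp (- \<gamma> * (t - s)) * (sqrt (t - s) * sqrt (2 / pi)))"
    using assms by (simp add: nn_integral_abs_increment[OF bm] ennreal_mult)
  also have "\<dots> \<le> ennreal ((1 + 2 / \<gamma>) * exp (- (\<gamma> / 2) * (t - s)))"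
  proof (rule ennreal_leI)
    have "sqrt (2 / pi) \<le> 1" using pi_gt3 by simp
    then have "exp (- \<gamma> * (t - s)) * (sqrt (t - s) * sqrt (2 / pi)) \<le> exp (- \<gamma> * (t - s)) * sqrt (t - s)"
      using assms by (intro mult_left_mono mult_left_le) auto
    also have "\<dots> = sqrt (t - s) * exp (- \<gamma> * (t - s))" by simp
    also have "\<dots> \<le> (1 + 2 / \<gamma>) * exp (- (\<gamma> / 2) * (t - s))"
      using assms by (intro sqrt_mult_exp_le) auto
    finally show "exp (- \<gamma> * (t - s)) * (sqrt (t - s) * sqrt (2 / pi)) \<le> (1 + 2 / \<gamma>) * exp (- (\<gamma> / 2) * (t - s))" .
  qed
  finally show ?thesis .
qed

lemma weighted_abs_increment_integrals_bounded:
  assumes bm: "std_brownian_motion M B" and "0 < \<gamma>" and G: "G \<in> sets M"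
    and cont: "\<And>\<omega>. \<omega> \<in> G \<Longrightarrow> continuous_on {0..} (\<lambda>s. B s \<omega>)"
  obtains R where "\<And>t. 0 \<le> t \<Longrightarrow> R t \<in> borel_measurable M"
    and "\<And>t. 0 \<le> t \<Longrightarrow> (\<integral>\<^sup>+\<omega>. R t \<omega> \<partial>M) \<le> ennreal ((1 + 2 / \<gamma>) / (\<gamma> / 2))"
    and "\<And>t \<omega>. 0 \<le> t \<Longrightarrow> \<omega> \<in> G \<Longrightarrow>
      R t \<omega> = ennreal (integral {0..t} (\<lambda>s. exp (- \<gamma> * (t - s)) * \<bar>B t \<omega> - B s \<omega>\<bar>))"
proof
  \<comment> \<open>A jointly measurable version of B, so that Tonelli applies to the double integral.\<close>
  define P where "P p = (if fst p \<in> G \<and> 0 \<le> snd p then B (snd p) (fst p) else 0)" for p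
  have [measurable]: "P \<in> borel_measurable (M \<Otimes>\<^sub>M lborel)"
    unfolding P_def[abs_def]
    by (rule measurable_process_continuous_paths[OF G std_brownian_motion_measurable[OF bm] cont])
  define f where "f t \<omega> s = ennreal (indicator {0..t} s * (exp (- \<gamma> * (t - s)) * \<bar>P (\<omega>, t) - P (\<omega>, s)\<bar>))"
    for t \<omega> s
  have f_meas: "case_prod (f t) \<in> borel_measurable (M \<Otimes>\<^sub>M lborel)" for t
    unfolding f_def by measurable
  show "(\<lambda>\<omega>. \<integral>\<^sup>+s. f t \<omega> s \<partial>lborel) \<in> borel_measurable M" for t
    by (rule lborel.borel_measurable_nn_integral[OF f_meas])
  interpret pair_sigma_finite M "lborel :: real measure" ..
  show "(\<integral>\<^sup>+\<omega>. (\<integral>\<^sup>+s. f t \<omega> s \<partial>lborel) \<partial>M) \<le> ennreal ((1 + 2 / \<gamma>) / (\<gamma> / 2))" if "0 \<le> t" for t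
  proof -
    have "(\<integral>\<^sup>+\<omega>. f t \<omega> s \<partial>M) \<le> ennreal (indicator {0..t} s * ((1 + 2 / \<gamma>) * exp (- (\<gamma> / 2) * (t - s))))"
      for s
    proof (cases "0 \<le> s \<and> s < t")
      case True
      then have "(\<integral>\<^sup>+\<omega>. f t \<omega> s \<partial>M) \<le> (\<integral>\<^sup>+\<omega>. ennreal (exp (- \<gamma> * (t - s)) * \<bar>B t \<omega> - B s \<omega>\<bar>) \<partial>M)"
        by (intro nn_integral_mono ennreal_leI) (auto simp: f_def P_def)
      also have "\<dots> \<le> ennreal ((1 + 2 / \<gamma>) * exp (- (\<gamma> / 2) * (t - s)))"
        using True by (intro nn_integral_weighted_abs_increment_le[OF bm \<open>0 < \<gamma>\<close>]) auto
      finally show ?thesis using True by simp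
    next
      case False
      then have "f t \<omega> s = 0" for \<omega> by (cases "s = t") (auto simp: f_def)
      then show ?thesis by simp
    qed
    then have "(\<integral>\<^sup>+s. (\<integral>\<^sup>+\<omega>. f t \<omega> s \<partial>M) \<partial>lborel)
        \<le> (\<integral>\<^sup>+s. ennreal (indicator {0..t} s * ((1 + 2 / \<gamma>) * exp (- (\<gamma> / 2) * (t - s)))) \<partial>lborel)"
      by (intro nn_integral_mono)
    also have "\<dots> \<le> ennreal ((1 + 2 / \<gamma>) / (\<gamma> / 2))"
      using \<open>0 < \<gamma>\<close> \<open>0 \<le> t\<close> by (intro nn_integral_exp_decay_le) auto
    finally show ?thesis by (simp only: Fubini'[OF f_meas])
  qed
  show "(\<integral>\<^sup>+s. f t \<omega> s \<partial>lborel) = ennreal (integral {0..t} (\<lambda>s. exp (- \<gamma> * (t - s)) * \<bar>B t \<omega> - B s \<omega>\<bar>))"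
    if "0 \<le> t" and "\<omega> \<in> G" for t \<omega>
  proof -
    have "f t \<omega> s = ennreal (indicator {0..t} s * (exp (- \<gamma> * (t - s)) * \<bar>B t \<omega> - B s \<omega>\<bar>))" for s
      using that by (auto simp: f_def P_def indicator_def)
    then show ?thesis
      using that by (simp add: nn_integral_indicator_eq_integral continuous_intros
          continuous_on_subset[OF cont[OF \<open>\<omega> \<in> G\<close>]])
  qed
qed

end

section \<open>Almost sure unboundedness of the weighted integral\<close>

context prob_space
begin

lemma prob_below_level_on_grid:
  assumes bm: "std_brownian_motion M B" and "0 < \<epsilon>" and "0 < m"
  obtains ts where "\<And>k. 1 \<le> ts (Suc k)"
    and "{\<omega>\<in>space M. B 0 \<omega> = 0 \<and> (\<forall>k\<in>{1..m}. B (ts k) \<omega> < b)} \<in> events"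
    and "prob {\<omega>\<in>space M. B 0 \<omega> = 0 \<and> (\<forall>k\<in>{1..m}. B (ts k) \<omega> < b)}
      \<le> \<epsilon> + (1 - exp (- 2) / sqrt (2 * pi)) ^ m"
proof -
  \<comment> \<open>Outside the event Far below, B (ts i) \<ge> - L (ts i); then B (ts (i + 1)) < b forces
    an increment below b + L (ts i), which by the choice of the gaps is at most one standard
    deviation.\<close>
  define L where "L \<tau> = real m / \<epsilon> * sqrt \<tau>" for \<tau>
  obtain ts where ts: "ts 0 = 0" "strict_mono ts" "\<And>k. 1 \<le> ts (Suc k)"
    and gaps: "\<And>i. b + L (ts i) \<le> sqrt (ts (Suc i) - ts i)"
    using exists_time_grid[of "\<lambda>\<tau>. b + L \<tau>"] by blast
  have ts_pos: "0 < ts j" if "1 \<le> j" for j using ts(3)[of "j - 1"] that by simp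
  have [measurable]: "B 0 \<in> borel_measurable M"
    by (rule std_brownian_motion_measurable[OF bm]) simp
  have [measurable]: "B (ts k) \<in> borel_measurable M" for k
    using std_brownian_motion_measurable[OF bm] ts(1) ts_pos[of k] by (cases k) auto
  define Far where "Far = (\<Union>j\<in>{1..<m}. {\<omega>\<in>space M. L (ts j) \<le> \<bar>B (ts j) \<omega> - B 0 \<omega>\<bar>})"
  define Low where "Low = {\<omega>\<in>space M. \<forall>i<m. B (ts (Suc i)) \<omega> - B (ts i) \<omega> \<le> b + L (ts i)}"
  have "Far \<in> events" unfolding Far_def by (intro sets.finite_UN) auto
  have "Low = space M \<inter> (\<Inter>i\<in>{..<m}. {\<omega>\<in>space M. B (ts (Suc i)) \<omega> - B (ts i) \<omega> \<le> b + L (ts i)})"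
    by (auto simp: Low_def)
  also have "\<dots> \<in> events" using \<open>0 < m\<close> by (intro sets.Int sets.top sets.finite_INT) auto
  finally have "Low \<in> events" .
  have "prob Far \<le> card {1..<m} / (real m / \<epsilon>)"
    unfolding Far_def L_def using assms ts_pos by (intro prob_UN_abs_increment_ge[OF bm]) auto
  also have "\<dots> \<le> \<epsilon>" using assms by (simp add: field_simps)
  finally have "prob Far \<le> \<epsilon>" .
  have "prob Low \<le> (1 - exp (- 2) / sqrt (2 * pi)) ^ m"
    unfolding Low_def using ts(1,2) \<open>0 < m\<close> by (intro prob_increments_le[OF bm] gaps)
  have "{\<omega>\<in>space M. B 0 \<omega> = 0 \<and> (\<forall>k\<in>{1..m}. B (ts k) \<omega> < b)} \<subseteq> Far \<union> Low"
  proof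
    fix \<omega> assume \<omega>: "\<omega> \<in> {\<omega>\<in>space M. B 0 \<omega> = 0 \<and> (\<forall>k\<in>{1..m}. B (ts k) \<omega> < b)}"
    show "\<omega> \<in> Far \<union> Low"
    proof (cases "\<omega> \<in> Far")
      case False
      have "B (ts (Suc i)) \<omega> - B (ts i) \<omega> \<le> b + L (ts i)" if "i < m" for i
      proof -
        have "\<not> L (ts i) \<le> \<bar>B (ts i) \<omega> - B 0 \<omega>\<bar>" if "i \<noteq> 0"
          using False \<omega> \<open>i < m\<close> that unfolding Far_def by auto
        then have "- L (ts i) \<le> B (ts i) \<omega>" using \<omega> ts(1) by (cases "i = 0") (auto simp: L_def)
        moreover have "B (ts (Suc i)) \<omega> < b" using \<omega> that by auto
        ultimately show ?thesis by simp
      qed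
      with \<omega> show ?thesis by (simp add: Low_def)
    qed simp
  qed
  then have "prob {\<omega>\<in>space M. B 0 \<omega> = 0 \<and> (\<forall>k\<in>{1..m}. B (ts k) \<omega> < b)} \<le> prob (Far \<union> Low)"
    using \<open>Far \<in> events\<close> \<open>Low \<in> events\<close> by (intro finite_measure_mono) auto
  also have "\<dots> \<le> prob Far + prob Low" using \<open>Far \<in> events\<close> \<open>Low \<in> events\<close> by (rule measure_Un_le)
  also have "\<dots> \<le> \<epsilon> + (1 - exp (- 2) / sqrt (2 * pi)) ^ m"
    using \<open>prob Far \<le> \<epsilon>\<close> \<open>prob Low \<le> _\<close> by linarith
  finally have prob_bound: "prob {\<omega>\<in>space M. B 0 \<omega> = 0 \<and> (\<forall>k\<in>{1..m}. B (ts k) \<omega> < b)}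
      \<le> \<epsilon> + (1 - exp (- 2) / sqrt (2 * pi)) ^ m" .
  have "{\<omega>\<in>space M. B 0 \<omega> = 0 \<and> (\<forall>k\<in>{1..m}. B (ts k) \<omega> < b)}
      = {\<omega>\<in>space M. B 0 \<omega> = 0} \<inter> (\<Inter>k\<in>{1..m}. {\<omega>\<in>space M. B (ts k) \<omega> < b})"
    using \<open>0 < m\<close> by auto
  also have "\<dots> \<in> events" using \<open>0 < m\<close> by (intro sets.Int sets.finite_INT) auto
  finally show thesis using prob_bound by (rule that[of ts, OF ts(3)])
qed

lemma prob_exp_conv_bounded_le:
  assumes bm: "std_brownian_motion M B" and "0 < \<gamma>" and "0 < \<epsilon>" and G: "G \<in> events"
    and paths: "\<And>\<omega>. \<omega> \<in> G \<Longrightarrow> B 0 \<omega> = 0 \<and> continuous_on {0..} (\<lambda>s. B s \<omega>)"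
  shows "\<exists>S\<in>events. {\<omega>\<in>G. \<forall>t\<ge>0. exp_conv \<gamma> (\<lambda>s. B s \<omega>) t \<le> K} \<subseteq> S \<and> prob S \<le> \<epsilon>"
proof -
  have "exp (- 2) \<le> (1 :: real)" and "1 \<le> sqrt (2 * pi)" using pi_gt3 by simp_all
  then have "exp (- 2) \<le> sqrt (2 * pi)" by linarith
  then have q: "0 \<le> 1 - exp (- 2) / sqrt (2 * pi)" "1 - exp (- 2) / sqrt (2 * pi) < 1"
    by (simp_all add: divide_le_eq_1)
  obtain m where "0 < m" and "(1 - exp (- 2) / sqrt (2 * pi)) ^ m \<le> \<epsilon> / 3"
    using exists_pos_power_le[OF q, of "\<epsilon> / 3"] \<open>0 < \<epsilon>\<close> by auto
  \<comment> \<open>C bounds the expectations of the R t; with threshold a the m Markov estimates sum to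
    \<epsilon> / 3, and b is the level that J \<le> K and R < a force on B at the grid times.\<close>
  define C where "C = (1 + 2 / \<gamma>) / (\<gamma> / 2)"
  define a where "a = 3 * real m * C / \<epsilon>"
  define b where "b = \<bar>K + a\<bar> / ((1 - exp (- \<gamma>)) / \<gamma>)"
  have "0 < C" using \<open>0 < \<gamma>\<close> by (simp add: C_def add_pos_pos)
  then have "0 < a" using \<open>0 < \<epsilon>\<close> \<open>0 < m\<close> by (simp add: a_def)
  have "0 < \<epsilon> / 3" using \<open>0 < \<epsilon>\<close> by simp
  then obtain ts where ts: "\<And>k. 1 \<le> ts (Suc k)"
    and E: "{\<omega>\<in>space M. B 0 \<omega> = 0 \<and> (\<forall>k\<in>{1..m}. B (ts k) \<omega> < b)} \<in> events"
      "prob {\<omega>\<in>space M. B 0 \<omega> = 0 \<and> (\<forall>k\<in>{1..m}. B (ts k) \<omega> < b)}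
        \<le> \<epsilon> / 3 + (1 - exp (- 2) / sqrt (2 * pi)) ^ m"
    using prob_below_level_on_grid[OF bm _ \<open>0 < m\<close>, where b=b] by blast
  have ts_ge: "1 \<le> ts k" if "k \<in> {1..m}" for k using ts[of "k - 1"] that by simp
  obtain R where R_meas: "\<And>t. 0 \<le> t \<Longrightarrow> R t \<in> borel_measurable M"
    and R_int: "\<And>t. 0 \<le> t \<Longrightarrow> (\<integral>\<^sup>+\<omega>. R t \<omega> \<partial>M) \<le> ennreal C"
    and R_eq: "\<And>t \<omega>. 0 \<le> t \<Longrightarrow> \<omega> \<in> G \<Longrightarrow>
      R t \<omega> = ennreal (integral {0..t} (\<lambda>s. exp (- \<gamma> * (t - s)) * \<bar>B t \<omega> - B s \<omega>\<bar>))"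
    using weighted_abs_increment_integrals_bounded[OF bm \<open>0 < \<gamma>\<close> G] paths unfolding C_def by blast
  define Rough where "Rough = (\<Union>k\<in>{1..m}. {\<omega>\<in>space M. ennreal a \<le> R (ts k) \<omega>})"
  have R_k: "R (ts k) \<in> borel_measurable M" "(\<integral>\<^sup>+\<omega>. R (ts k) \<omega> \<partial>M) \<le> ennreal C"
    if "k \<in> {1..m}" for k
    using R_meas R_int ts_ge[OF that] by simp_all
  note Markov = prob_UN_nn_integral_Markov[of "{1..m}" a C "\<lambda>k. R (ts k)", folded Rough_def]
  have "Rough \<in> events" by (rule Markov) (use R_k \<open>0 < a\<close> \<open>0 < C\<close> in auto)
  have "prob Rough \<le> real (card {1..m}) * C / a" by (rule Markov) (use R_k \<open>0 < a\<close> \<open>0 < C\<close> in auto)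
  also have "real (card {1..m}) * C / a = \<epsilon> / 3"
    using \<open>0 < C\<close> \<open>0 < \<epsilon>\<close> \<open>0 < m\<close> by (simp add: a_def field_simps)
  finally have "prob Rough \<le> \<epsilon> / 3" .
  have "prob (Rough \<union> {\<omega>\<in>space M. B 0 \<omega> = 0 \<and> (\<forall>k\<in>{1..m}. B (ts k) \<omega> < b)})
      \<le> prob Rough + prob {\<omega>\<in>space M. B 0 \<omega> = 0 \<and> (\<forall>k\<in>{1..m}. B (ts k) \<omega> < b)}"
    by (rule measure_Un_le[OF \<open>Rough \<in> events\<close> E(1)])
  also have "\<dots> \<le> \<epsilon> / 3 + (\<epsilon> / 3 + \<epsilon> / 3)"
    using \<open>prob Rough \<le> \<epsilon> / 3\<close> E(2) \<open>(1 - exp (- 2) / sqrt (2 * pi)) ^ m \<le> \<epsilon> / 3\<close> by (intro add_mono) auto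
  finally have "prob (Rough \<union> {\<omega>\<in>space M. B 0 \<omega> = 0 \<and> (\<forall>k\<in>{1..m}. B (ts k) \<omega> < b)}) \<le> \<epsilon>"
    by simp
  moreover have "{\<omega>\<in>G. \<forall>t\<ge>0. exp_conv \<gamma> (\<lambda>s. B s \<omega>) t \<le> K}
      \<subseteq> Rough \<union> {\<omega>\<in>space M. B 0 \<omega> = 0 \<and> (\<forall>k\<in>{1..m}. B (ts k) \<omega> < b)}"
  proof
    fix \<omega> assume \<omega>: "\<omega> \<in> {\<omega>\<in>G. \<forall>t\<ge>0. exp_conv \<gamma> (\<lambda>s. B s \<omega>) t \<le> K}"
    then have "\<omega> \<in> G" and "\<omega> \<in> space M" using sets.sets_into_space[OF G] by auto
    show "\<omega> \<in> Rough \<union> {\<omega>\<in>space M. B 0 \<omega> = 0 \<and> (\<forall>k\<in>{1..m}. B (ts k) \<omega> < b)}"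
    proof (cases "\<omega> \<in> Rough")
      case False
      have "B (ts k) \<omega> < b" if "k \<in> {1..m}" for k
        unfolding b_def
      proof (rule path_less_if_exp_conv_le[OF \<open>0 < \<gamma>\<close> ts_ge[OF that]])
        show "continuous_on {0..ts k} (\<lambda>s. B s \<omega>)"
          using paths[OF \<open>\<omega> \<in> G\<close>] by (auto intro: continuous_on_subset)
        show "exp_conv \<gamma> (\<lambda>s. B s \<omega>) (ts k) \<le> K" using \<omega> ts_ge[OF that] by simp
        have "\<not> ennreal a \<le> R (ts k) \<omega>" using False \<open>\<omega> \<in> space M\<close> that by (auto simp: Rough_def)
        then show "integral {0..ts k} (\<lambda>s. exp (- \<gamma> * (ts k - s)) * \<bar>B (ts k) \<omega> - B s \<omega>\<bar>) < a"
          using R_eq[of "ts k" \<omega>] ts_ge[OF that] \<open>\<omega> \<in> G\<close> by (auto simp flip: not_le intro: ennreal_leI)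
      qed
      then show ?thesis using paths[OF \<open>\<omega> \<in> G\<close>] \<open>\<omega> \<in> space M\<close> by auto
    qed simp
  qed
  ultimately show ?thesis using \<open>Rough \<in> events\<close> E(1) by blast
qed

lemma AE_I_small_cover:
  assumes "\<And>\<epsilon>. 0 < \<epsilon> \<Longrightarrow> \<exists>S\<in>events. {\<omega>\<in>space M. \<not> P \<omega>} \<subseteq> S \<and> prob S \<le> \<epsilon>"
  shows "AE \<omega> in M. P \<omega>"
proof -
  obtain S where S: "\<And>n. S n \<in> events" "\<And>n. {\<omega>\<in>space M. \<not> P \<omega>} \<subseteq> S n"
    "\<And>n. prob (S n) \<le> 1 / real (Suc n)"
    using assms[of "1 / real (Suc _)"] by (metis of_nat_0_less_iff zero_less_Suc zero_less_divide_1_iff)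
  have bound: "prob (\<Inter>n. S n) \<le> 1 / real (Suc n)" for n
  proof -
    have "(\<Inter>n. S n) \<subseteq> S n" by blast
    from finite_measure_mono[OF this S(1)] S(3)[of n] show ?thesis by (rule order_trans)
  qed
  have "prob (\<Inter>n. S n) \<le> 0"
  proof (rule ccontr)
    assume "\<not> prob (\<Inter>n. S n) \<le> 0"
    then obtain n where "inverse (real (Suc n)) < prob (\<Inter>n. S n)"
      using reals_Archimedean by (metis not_le)
    with bound[of n] show False by (simp add: inverse_eq_divide)
  qed
  then have "(\<Inter>n. S n) \<in> null_sets M"
    using S(1) by (simp add: null_sets_def emeasure_eq_measure measure_nonneg antisym sets.countable_INT')
  then show ?thesis using S(2) by (intro AE_I'[of "\<Inter>n. S n"]) auto
qed

lemma AE_exp_conv_unbounded: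
  assumes bm: "std_brownian_motion M B" and "0 < \<gamma>"
  shows "AE \<omega> in M. \<forall>K. \<exists>t\<ge>0. K < exp_conv \<gamma> (\<lambda>s. B s \<omega>) t"
proof -
  obtain N where N: "N \<in> null_sets M"
    and bad_N: "{\<omega>\<in>space M. \<not> (B 0 \<omega> = 0 \<and> continuous_on {0..} (\<lambda>t. B t \<omega>))} \<subseteq> N"
    using std_brownian_motion_AE_paths[OF bm] unfolding eventually_ae_filter by blast
  define G where "G = space M - N"
  have G: "G \<in> events" using N by (auto simp: G_def)
  have paths: "B 0 \<omega> = 0 \<and> continuous_on {0..} (\<lambda>t. B t \<omega>)" if "\<omega> \<in> G" for \<omega>
    using that bad_N by (auto simp: G_def)
  have "AE \<omega> in M. \<omega> \<in> G" using N by (intro AE_I'[of N]) (auto simp: G_def)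
  moreover have "AE \<omega> in M. \<forall>n::nat. \<omega> \<in> G \<longrightarrow> (\<exists>t\<ge>0. real n < exp_conv \<gamma> (\<lambda>s. B s \<omega>) t)"
    unfolding AE_all_countable
  proof (intro allI AE_I_small_cover)
    fix n :: nat and \<epsilon> :: real assume "0 < \<epsilon>"
    from prob_exp_conv_bounded_le[OF bm \<open>0 < \<gamma>\<close> this G paths, of "real n"]
    show "\<exists>S\<in>events. {\<omega>\<in>space M. \<not> (\<omega> \<in> G \<longrightarrow> (\<exists>t\<ge>0. real n < exp_conv \<gamma> (\<lambda>s. B s \<omega>) t))} \<subseteq> S
        \<and> prob S \<le> \<epsilon>"
      by (auto simp: not_less)
  qed
  ultimately show ?thesis
    by eventually_elim (meson order.strict_trans reals_Archimedean2)
qed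

end

theorem lemma2:
  fixes Q :: "'a measure" and x y :: "'a \<Rightarrow> real" and B :: "real \<Rightarrow> 'a \<Rightarrow> real"
    and \<gamma> D :: real
  assumes "\<gamma> > 0" and "D > 0"
    and "prob_space Q"
    and "x \<in> borel_measurable Q" and "y \<in> borel_measurable Q"
    and "AE \<omega> in Q. x \<omega> > 0"
    and "std_brownian_motion Q B"
    and "prob_space.indep_set Q (pair_events Q x y) (process_events Q B)"
  shows "AE \<omega> in Q. ((\<lambda>t. Tclock \<gamma> D x y B t \<omega>) \<longlongrightarrow> \<infinity>) (at_left (tau \<gamma> D x y B \<omega>))"
proof -
  interpret prob_space Q by fact
  note bm = \<open>std_brownian_motion Q B\<close>
  from \<open>AE \<omega> in Q. x \<omega> > 0\<close> std_brownian_motion_AE_paths[OF bm]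
    AE_exp_conv_unbounded[OF bm \<open>\<gamma> > 0\<close>]
  show ?thesis
  proof eventually_elim
    case (elim \<omega>)
    then show ?case
      by (intro Tclock_tendsto_PInfty_if_exp_conv_unbounded[OF \<open>\<gamma> > 0\<close> \<open>D > 0\<close>]) auto
  qed
qed

end
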